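(* Let $C$ be a projective completely regular linear code in $\mathbb{F}_q^n$ (the Hamming space $H(n,q)$) with covering radius $\rho$, and for $0\le i\le\rho$ let $d_i$ be the number of cosets of $C$ of weight $i$. Then $d_i^2\ge d_{i-1}d_{i+1}$ for all $1\le i\le \rho-1$.
   Context: Weights are Hamming weights. A coset of a linear code $C$ is a translate $u+C$; its weight is the minimum weight of its elements; the covering radius $\rho$ is the largest coset weight. $C$ is completely regular if the weight distribution of every coset depends only on the weight of that coset. $C$ is projective if a generator matrix of $C$ has no zero column and no two columns that are scalar multiples of each other. *)

theory Defs
  imports Main
begin

text \<open>Vectors of F_q^n are functions from a finite index type 'n (the n coordinates)
  into a finite field 'a (F_q).\<close>

definition hwt :: "('n::finite \<Rightarrow> 'a::{finite,field}) \<Rightarrow> nat" where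
  "hwt x = card {i. x i \<noteq> 0}"

definition linear_code :: "('n::finite \<Rightarrow> 'a::{finite,field}) set \<Rightarrow> bool" where
  "linear_code C \<longleftrightarrow> (\<lambda>i. 0) \<in> C
     \<and> (\<forall>x\<in>C. \<forall>y\<in>C. (\<lambda>i. x i + y i) \<in> C)
     \<and> (\<forall>c. \<forall>x\<in>C. (\<lambda>i. c * x i) \<in> C)"

definition generator_matrix ::
  "('n::finite \<Rightarrow> 'a::{finite,field}) set \<Rightarrow> nat \<Rightarrow> (nat \<Rightarrow> 'n \<Rightarrow> 'a) \<Rightarrow> bool" where
  "generator_matrix C k G \<longleftrightarrow>
     C = {(\<lambda>i. \<Sum>r<k. a r * G r i) | a. True}
     \<and> (\<forall>a. (\<lambda>i. \<Sum>r<k. a r * G r i) = (\<lambda>i. 0) \<longrightarrow> (\<forall>r<k. a r = 0))"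

definition projective_code :: "('n::finite \<Rightarrow> 'a::{finite,field}) set \<Rightarrow> bool" where
  "projective_code C \<longleftrightarrow> (\<exists>k G. generator_matrix C k G
     \<and> (\<forall>i. \<exists>r<k. G r i \<noteq> 0)
     \<and> (\<forall>i j c. i \<noteq> j \<longrightarrow> \<not> (\<forall>r<k. G r j = c * G r i)))"

definition coset :: "('n::finite \<Rightarrow> 'a::{finite,field}) set \<Rightarrow> ('n \<Rightarrow> 'a) \<Rightarrow> ('n \<Rightarrow> 'a) set" where
  "coset C u = {(\<lambda>i. u i + c i) | c. c \<in> C}"

definition coset_weight :: "('n::finite \<Rightarrow> 'a::{finite,field}) set \<Rightarrow> nat" where
  "coset_weight D = Min (hwt ` D)"

definition cosets :: "('n::finite \<Rightarrow> 'a::{finite,field}) set \<Rightarrow> ('n \<Rightarrow> 'a) set set" where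
  "cosets C = {coset C u | u. True}"

definition covering_radius :: "('n::finite \<Rightarrow> 'a::{finite,field}) set \<Rightarrow> nat" where
  "covering_radius C = Max (coset_weight ` cosets C)"

definition num_cosets :: "('n::finite \<Rightarrow> 'a::{finite,field}) set \<Rightarrow> nat \<Rightarrow> nat" where
  "num_cosets C i = card {D \<in> cosets C. coset_weight D = i}"

definition weight_distribution :: "('n::finite \<Rightarrow> 'a::{finite,field}) set \<Rightarrow> nat \<Rightarrow> nat" where
  "weight_distribution D j = card {x \<in> D. hwt x = j}"

definition completely_regular :: "('n::finite \<Rightarrow> 'a::{finite,field}) set \<Rightarrow> bool" where
  "completely_regular C \<longleftrightarrow> (\<forall>D\<in>cosets C. \<forall>D'\<in>cosets C.
     coset_weight D = coset_weight D' \<longrightarrow> weight_distribution D = weight_distribution D')"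

end

(*
  Join two vectors of F_q^n when they differ in one coordinate, and call the weight of x + C
  the level of x.  Levels of neighbours differ by at most one.  Counting in two ways the pairs
  (e, c), e a weight-one vector and c a code word, with hwt (x + e + c) = j, and using complete
  regularity, one sees that the numbers c(x), a(x), b(x) of neighbours of x one level lower,
  at the same level and one level higher depend only on the level i of x: these are the
  intersection numbers c_i, a_i, b_i.  The layer of level i has |C| d_i elements, and counting
  the edges between two consecutive layers gives d_i b_i = d_(i+1) c_(i+1).  Moving a vector
  one level down can only increase b and decrease c, so b_(i+1) <= b_i and c_i <= c_(i+1),
  and hence d_(i-1) d_(i+1) <= d_i^2.
*)

theory Submission
  imports Defs "HOL-Library.Function_Algebras"
begin

lemma nat_mult_le_square_of_ratios:
  fixes d0 d1 d2 b0 b1 c1 c2 :: nat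
  assumes "d0 * b0 = d1 * c1" and "d1 * b1 = d2 * c2"
    and "b1 \<le> b0" and "c1 \<le> c2" and "0 < c2"
  shows "d0 * d2 \<le> d1\<^sup>2"
proof (cases "d2 = 0")
  case False
  then have "0 < b0" using assms(2-5) by (metis mult_is_0 neq0_conv le_0_eq)
  have "(d0 * d2) * (b0 * c2) = (d1 * c1) * (d1 * b1)"
    using assms(1,2) by (metis mult.assoc mult.left_commute)
  also have "\<dots> \<le> (d1 * c2) * (d1 * b0)"
    using assms(3,4) by (intro mult_le_mono mult_le_mono2) auto
  finally have "(d0 * d2) * (b0 * c2) \<le> d1\<^sup>2 * (b0 * c2)"
    by (simp add: power2_eq_square ac_simps)
  then show ?thesis using \<open>0 < b0\<close> \<open>0 < c2\<close> by simp
qed simp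

definition single :: "'n \<Rightarrow> 'a::zero \<Rightarrow> 'n \<Rightarrow> 'a" where
  "single k a = (\<lambda>j. if j = k then a else 0)"

lemma hwt_add_le: "hwt (x + y) \<le> hwt x + hwt (y :: 'n::finite \<Rightarrow> 'a::{finite,field})"
proof -
  have "{i. (x + y) i \<noteq> 0} \<subseteq> {i. x i \<noteq> 0} \<union> {i. y i \<noteq> 0}" by auto
  then show ?thesis unfolding hwt_def by (meson card_Un_le card_mono finite le_trans)
qed

lemma hwt_uminus [simp]: "hwt (- x) = hwt (x :: 'n::finite \<Rightarrow> 'a::{finite,field})"
  by (simp add: hwt_def)

lemma hwt_le_add: "hwt x \<le> hwt (x + y) + hwt (y :: 'n::finite \<Rightarrow> 'a::{finite,field})"
  using hwt_add_le[of "x + y" "- y"] by simp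

lemma hwt_eq_0_iff [simp]: "hwt y = 0 \<longleftrightarrow> y = (0 :: 'n::finite \<Rightarrow> 'a::{finite,field})"
  by (auto simp: hwt_def fun_eq_iff)

lemma hwt_pos: "y k \<noteq> 0 \<Longrightarrow> 0 < hwt (y :: 'n::finite \<Rightarrow> 'a::{finite,field})"
  by (metis gr0I hwt_eq_0_iff zero_fun_apply)

lemma hwt_single:
  "hwt (single k (a :: 'a::{finite,field}) :: 'n::finite \<Rightarrow> 'a) = (if a = 0 then 0 else 1)"
proof -
  have "{i. single k a i \<noteq> 0} = (if a = 0 then {} else {k})" by (auto simp: single_def)
  then show ?thesis by (simp add: hwt_def)
qed

lemma hwt_add_single:
  fixes y :: "'n::finite \<Rightarrow> 'a::{finite,field}"
  shows "hwt (y + single k a) =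
    (if y k + a = 0 then (if y k = 0 then hwt y else hwt y - 1)
     else (if y k = 0 then Suc (hwt y) else hwt y))"
proof -
  have "{i. (y + single k a) i \<noteq> 0} =
      (if y k + a = 0 then {i. y i \<noteq> 0} - {k} else insert k {i. y i \<noteq> 0})"
    by (auto simp: single_def)
  then show ?thesis by (simp add: hwt_def card_Diff_singleton_if card_insert_if)
qed

definition steps :: "('n::finite \<Rightarrow> 'a::{finite,field}) set" where
  "steps = {e. hwt e = 1}"

lemma steps_eq_image:
  "(steps :: ('n::finite \<Rightarrow> 'a::{finite,field}) set) =
    (\<lambda>(k, a). single k a) ` (UNIV \<times> (UNIV - {0}))"
proof (intro set_eqI iffI)
  fix e :: "'n \<Rightarrow> 'a" assume "e \<in> steps"
  then have "card {i. e i \<noteq> 0} = 1" by (simp add: steps_def hwt_def)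
  then obtain k where k: "{i. e i \<noteq> 0} = {k}" by (rule card_1_singletonE)
  then have "e = single k (e k)" by (auto simp: single_def fun_eq_iff)
  moreover have "e k \<noteq> 0" using k by auto
  ultimately show "e \<in> (\<lambda>(k, a). single k a) ` (UNIV \<times> (UNIV - {0}))"
    by (intro image_eqI[of _ _ "(k, e k)"]) auto
qed (auto simp: steps_def hwt_single split: if_splits)

lemma inj_on_single: "inj_on (\<lambda>(k, a). single k a :: 'n \<Rightarrow> 'a::zero) (UNIV \<times> (UNIV - {0}))"
  by (auto intro!: inj_onI simp: single_def fun_eq_iff split: if_splits)

lemma card_steps_filter:
  "card {e \<in> steps. P e} =
    card {(k, a). a \<noteq> 0 \<and> P (single k a :: 'n::finite \<Rightarrow> 'a::{finite,field})}"
proof -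
  have "{e \<in> steps. P e} = (\<lambda>(k, a). single k a) ` {(k, a). a \<noteq> 0 \<and> P (single k a)}"
    by (auto simp: steps_eq_image)
  moreover have "inj_on (\<lambda>(k, a). single k a :: 'n \<Rightarrow> 'a) {(k, a). a \<noteq> 0 \<and> P (single k a)}"
    by (rule inj_on_subset[OF inj_on_single]) auto
  ultimately show ?thesis by (simp add: card_image)
qed

lemma card_steps_down:
  fixes y :: "'n::finite \<Rightarrow> 'a::{finite,field}"
  shows "card {e \<in> steps. Suc (hwt (y + e)) = hwt y} = hwt y"
proof -
  have "{(k, a). a \<noteq> 0 \<and> Suc (hwt (y + single k a)) = hwt y} =
      (\<lambda>k. (k, - y k)) ` {i. y i \<noteq> 0}"
    by (auto simp: hwt_add_single add_eq_0_iff2 dest: hwt_pos split: if_splits)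
  then show ?thesis
    by (simp add: card_steps_filter card_image inj_on_def hwt_def)
qed

lemma card_steps_same:
  fixes y :: "'n::finite \<Rightarrow> 'a::{finite,field}"
  shows "card {e \<in> steps. hwt (y + e) = hwt y} = hwt y * (card (UNIV :: 'a set) - 2)"
proof -
  have "{(k, a). a \<noteq> 0 \<and> hwt (y + single k a) = hwt y} =
      Sigma {i. y i \<noteq> 0} (\<lambda>k. UNIV - {0, - y k})"
    by (auto simp: hwt_add_single add_eq_0_iff2 dest: hwt_pos split: if_splits)
  moreover have "card (UNIV - {0, - y k}) = card (UNIV :: 'a set) - 2" if "y k \<noteq> 0" for k
    using that by (subst card_Diff_subset) auto
  ultimately show ?thesis by (simp add: card_steps_filter card_SigmaI hwt_def)
qed

lemma card_steps_to_weight: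
  fixes y :: "'n::finite \<Rightarrow> 'a::{finite,field}"
  assumes "j \<le> hwt y"
  shows "card {e \<in> steps. hwt (y + e) = j} =
    (if hwt y = j then j * (card (UNIV :: 'a set) - 2) else 0) + (if hwt y = Suc j then Suc j else 0)"
proof -
  consider "hwt y = j" | "hwt y = Suc j" | "Suc (Suc j) \<le> hwt y" using assms by linarith
  then show ?thesis
  proof cases
    case 1
    then show ?thesis using card_steps_same[of y] by simp
  next
    case 2
    then show ?thesis using card_steps_down[of y] by simp
  next
    case 3
    have "hwt (y + e) \<noteq> j" if "e \<in> steps" for e
      using hwt_le_add[of y e] that 3 by (simp add: steps_def)
    then show ?thesis using 3 by auto
  qed
qed

locale linear_code_cosets =
  fixes C :: "('n::finite \<Rightarrow> 'a::{finite,field}) set"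
  assumes linear: "linear_code C"
begin

lemma zero_mem: "0 \<in> C"
  using linear by (simp add: linear_code_def zero_fun_def)

lemma add_mem: "x \<in> C \<Longrightarrow> y \<in> C \<Longrightarrow> x + y \<in> C"
  using linear by (simp add: linear_code_def plus_fun_def)

lemma uminus_mem: "x \<in> C \<Longrightarrow> - x \<in> C"
  using linear unfolding linear_code_def by (metis (no_types) mult_minus1 uminus_apply ext)

lemma coset_eq_image: "coset C u = (+) u ` C"
  by (auto simp: coset_def plus_fun_def)

lemma coset_add_mem: "c \<in> C \<Longrightarrow> coset C (x + c) = coset C x"
  unfolding coset_eq_image
proof (intro set_eqI iffI)
  fix y assume "c \<in> C" "y \<in> (+) (x + c) ` C"
  then show "y \<in> (+) x ` C" by (auto simp: add.assoc intro!: add_mem)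
next
  fix y assume "c \<in> C" "y \<in> (+) x ` C"
  then obtain c' where "c' \<in> C" "y = x + c'" by auto
  moreover have "c' + - c \<in> C" using \<open>c \<in> C\<close> \<open>c' \<in> C\<close> by (intro add_mem uminus_mem)
  ultimately show "y \<in> (+) (x + c) ` C"
    by (intro image_eqI[of _ _ "c' + - c"]) (simp_all add: algebra_simps)
qed

lemma coset_eq_if_mem: "z \<in> coset C u \<Longrightarrow> coset C z = coset C u"
  by (auto simp: coset_add_mem coset_eq_image[of u])

lemma card_coset: "card (coset C u) = card C"
  by (simp add: coset_eq_image card_image)

definition level :: "('n \<Rightarrow> 'a) \<Rightarrow> nat" where
  "level x = coset_weight (coset C x)"

lemma level_eq_Min: "level x = Min ((\<lambda>c. hwt (x + c)) ` C)"
  by (simp add: level_def coset_weight_def coset_eq_image image_image)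

lemma level_le_hwt: "c \<in> C \<Longrightarrow> level x \<le> hwt (x + c)"
  by (simp add: level_eq_Min)

lemma level_attained: obtains c where "c \<in> C" "hwt (x + c) = level x"
proof -
  have "level x \<in> (\<lambda>c. hwt (x + c)) ` C"
    unfolding level_eq_Min using zero_mem by (intro Min_in) auto
  then show ?thesis using that by auto
qed

lemma level_add_le: "level (x + v) \<le> level x + hwt v"
proof -
  obtain c where c: "c \<in> C" "hwt (x + c) = level x" by (rule level_attained)
  have "level (x + v) \<le> hwt (x + c + v)"
    using level_le_hwt[OF c(1), of "x + v"] by (simp add: ac_simps)
  also have "\<dots> \<le> level x + hwt v" using hwt_add_le[of "x + c" v] c(2) by simp
  finally show ?thesis .
qed

lemma level_le_add: "level x \<le> level (x + v) + hwt v"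
  using level_add_le[of "x + v" "- v"] by simp

lemma level_step_down:
  assumes "level x = Suc m"
  obtains e where "e \<in> steps" "level (x + e) = m"
proof -
  obtain c where c: "c \<in> C" "hwt (x + c) = Suc m" using assms by (metis level_attained)
  then have "x + c \<noteq> 0" by (metis hwt_eq_0_iff nat.distinct(1))
  then obtain k where k: "(x + c) k \<noteq> 0" by (auto simp: fun_eq_iff)
  let ?e = "single k (- (x + c) k)"
  have e: "?e \<in> steps" using k by (simp add: steps_def hwt_single del: plus_fun_apply)
  have "level (x + ?e) \<le> hwt (x + c + ?e)"
    using level_le_hwt[OF c(1), of "x + ?e"] by (simp add: ac_simps)
  also have "\<dots> = m" using c(2) k by (simp add: hwt_add_single)
  finally have "level (x + ?e) \<le> m" .
  moreover have "level x \<le> level (x + ?e) + 1" using level_le_add[of x ?e] e by (simp add: steps_def)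
  ultimately show ?thesis using that e assms by simp
qed

lemma weight_distribution_coset:
  "weight_distribution (coset C x) j = card {c \<in> C. hwt (x + c) = j}"
proof -
  have "{y \<in> coset C x. hwt y = j} = (+) x ` {c \<in> C. hwt (x + c) = j}"
    by (auto simp: coset_eq_image)
  then show ?thesis by (simp add: weight_distribution_def card_image)
qed

lemma weight_distribution_below_level:
  "j < level x \<Longrightarrow> weight_distribution (coset C x) j = 0"
  using level_le_hwt[of _ x] by (force simp: weight_distribution_coset)

lemma weight_distribution_level_pos: "0 < weight_distribution (coset C x) (level x)"
  by (rule level_attained[of x]) (auto simp: weight_distribution_coset card_gt_0_iff)

lemma sum_steps_weight_distribution:
  assumes "j \<le> level x"
  shows "(\<Sum>e\<in>steps. weight_distribution (coset C (x + e)) j) =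
    j * (card (UNIV :: 'a set) - 2) * weight_distribution (coset C x) j
    + Suc j * weight_distribution (coset C x) (Suc j)"
proof -
  have "(\<Sum>e\<in>steps. weight_distribution (coset C (x + e)) j)
      = (\<Sum>e\<in>steps. \<Sum>c\<in>C. if hwt (x + c + e) = j then 1 else 0)"
    by (simp add: weight_distribution_coset sum.If_cases Int_def ac_simps)
  also have "\<dots> = (\<Sum>c\<in>C. card {e \<in> steps. hwt (x + c + e) = j})"
    by (subst sum.swap) (simp add: sum.If_cases Int_def)
  also have "\<dots> = (\<Sum>c\<in>C. (if hwt (x + c) = j then j * (card (UNIV :: 'a set) - 2) else 0)
      + (if hwt (x + c) = Suc j then Suc j else 0))"
    using level_le_hwt assms by (intro sum.cong refl card_steps_to_weight) (meson le_trans)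
  also have "\<dots> = j * (card (UNIV :: 'a set) - 2) * weight_distribution (coset C x) j
      + Suc j * weight_distribution (coset C x) (Suc j)"
    by (simp add: sum.distrib sum.If_cases Int_def weight_distribution_coset)
  finally show ?thesis .
qed

definition down_steps :: "('n \<Rightarrow> 'a) \<Rightarrow> ('n \<Rightarrow> 'a) set" where
  "down_steps x = {e \<in> steps. Suc (level (x + e)) = level x}"

definition flat_steps :: "('n \<Rightarrow> 'a) \<Rightarrow> ('n \<Rightarrow> 'a) set" where
  "flat_steps x = {e \<in> steps. level (x + e) = level x}"

definition up_steps :: "('n \<Rightarrow> 'a) \<Rightarrow> ('n \<Rightarrow> 'a) set" where
  "up_steps x = {e \<in> steps. level (x + e) = Suc (level x)}"

lemma level_add_step:
  assumes "e \<in> steps"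
  shows "level (x + e) \<le> Suc (level x)" and "level x \<le> Suc (level (x + e))"
  using level_add_le[of x e] level_le_add[of x e] assms by (simp_all add: steps_def)

lemma sum_steps_split:
  "(\<Sum>e\<in>steps. g e) = (\<Sum>e\<in>down_steps x. g e) + (\<Sum>e\<in>flat_steps x. g e) + (\<Sum>e\<in>up_steps x. g e)"
proof -
  have "steps = down_steps x \<union> flat_steps x \<union> up_steps x"
    using level_add_step[of _ x] by (fastforce simp: down_steps_def flat_steps_def up_steps_def)
  moreover have "sum g (down_steps x \<union> flat_steps x \<union> up_steps x) =
      sum g (down_steps x \<union> flat_steps x) + sum g (up_steps x)"
    by (rule sum.union_disjoint) (auto simp: down_steps_def flat_steps_def up_steps_def)
  moreover have "sum g (down_steps x \<union> flat_steps x) = sum g (down_steps x) + sum g (flat_steps x)"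
    by (rule sum.union_disjoint) (auto simp: down_steps_def flat_steps_def)
  ultimately show ?thesis by simp
qed

definition layer :: "nat \<Rightarrow> ('n \<Rightarrow> 'a) set" where
  "layer l = {x. level x = l}"

lemma card_layer: "card (layer l) = card C * num_cosets C l"
proof -
  let ?Q = "{D \<in> cosets C. coset_weight D = l}"
  have "\<Union>?Q = layer l"
  proof (intro set_eqI iffI)
    fix x assume "x \<in> \<Union>?Q"
    then show "x \<in> layer l"
      using coset_eq_if_mem by (auto simp: layer_def level_def cosets_def)
  next
    fix x assume "x \<in> layer l"
    moreover have "x \<in> coset C x" using zero_mem by (force simp: coset_eq_image)
    ultimately show "x \<in> \<Union>?Q" by (auto simp: layer_def level_def cosets_def)
  qed
  moreover have "card (\<Union>?Q) = card C * card ?Q"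
    by (rule card_partition[OF finite finite, symmetric])
      (auto simp: cosets_def card_coset dest: coset_eq_if_mem)
  ultimately show ?thesis by (simp add: num_cosets_def)
qed

lemma layer_edge_count:
  "(\<Sum>x\<in>layer i. card (up_steps x)) = (\<Sum>y\<in>layer (Suc i). card (down_steps y))"
proof -
  let ?A = "Sigma (layer i) up_steps"
  let ?B = "Sigma (layer (Suc i)) down_steps"
  let ?flip = "\<lambda>(x, e). (x + e, - e)"
  have "?flip ` ?A \<subseteq> ?B" "?flip ` ?B \<subseteq> ?A"
    by (auto simp: layer_def up_steps_def down_steps_def steps_def)
  moreover have "?flip (?flip z) = z" for z :: "('n \<Rightarrow> 'a) \<times> ('n \<Rightarrow> 'a)"
    by (cases z) simp
  ultimately have "bij_betw ?flip ?A ?B"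
    by (intro bij_betw_byWitness[where f' = ?flip]) auto
  then have "card ?A = card ?B" by (rule bij_betw_same_card)
  then show ?thesis by (simp add: card_SigmaI)
qed

lemma card_up_steps_le_below:
  assumes "e0 \<in> steps" and "level x = Suc (level (x + e0))"
  shows "card (up_steps x) \<le> card (up_steps (x + e0))"
proof (rule card_mono[OF finite], rule subsetI)
  fix e assume e: "e \<in> up_steps x"
  then have "e \<in> steps" by (simp add: up_steps_def)
  have "level (x + e) \<le> Suc (level (x + e + e0))" "level (x + e0 + e) \<le> Suc (level (x + e0))"
    using level_add_step \<open>e \<in> steps\<close> assms(1) by blast+
  with e show "e \<in> up_steps (x + e0)" using assms(2) by (auto simp: up_steps_def ac_simps)
qed

lemma card_down_steps_below_le:
  assumes "e0 \<in> steps" and "level x = Suc (level (x + e0))"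
  shows "card (down_steps (x + e0)) \<le> card (down_steps x)"
proof (rule card_mono[OF finite], rule subsetI)
  fix e assume e: "e \<in> down_steps (x + e0)"
  then have "e \<in> steps" by (simp add: down_steps_def)
  have "level (x + e) \<le> Suc (level (x + e + e0))" "level x \<le> Suc (level (x + e))"
    using level_add_step \<open>e \<in> steps\<close> assms(1) by blast+
  with e show "e \<in> down_steps x" using assms(2) by (auto simp: down_steps_def ac_simps)
qed

end

locale completely_regular_code = linear_code_cosets +
  assumes completely_regular: "completely_regular C"
begin

lemma weight_distribution_level_invariant:
  "level x = level x' \<Longrightarrow> weight_distribution (coset C x) = weight_distribution (coset C x')"
  using completely_regular unfolding completely_regular_def level_def cosets_def by blast

lemma sum_steps_weight_distribution_split:
  assumes "j \<le> level x"
  shows "(\<Sum>e\<in>steps. weight_distribution (coset C (x + e)) j) =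
    (\<Sum>e\<in>down_steps x. weight_distribution (coset C (x + e)) j)
    + card (flat_steps x) * weight_distribution (coset C x) j"
proof -
  have "weight_distribution (coset C (x + e)) j = weight_distribution (coset C x) j"
    if "e \<in> flat_steps x" for e
    using that weight_distribution_level_invariant[of "x + e" x] by (simp add: flat_steps_def)
  then have "(\<Sum>e\<in>flat_steps x. weight_distribution (coset C (x + e)) j) =
      card (flat_steps x) * weight_distribution (coset C x) j"
    by simp
  moreover have "(\<Sum>e\<in>up_steps x. weight_distribution (coset C (x + e)) j) = 0"
    using assms by (simp add: up_steps_def weight_distribution_below_level)
  ultimately show ?thesis by (simp add: sum_steps_split[of _ x])
qed

lemma sum_down_steps_weight_distribution:
  assumes "level x = Suc (level z)"
  shows "(\<Sum>e\<in>down_steps x. weight_distribution (coset C (x + e)) j) =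
    card (down_steps x) * weight_distribution (coset C z) j"
proof -
  have "weight_distribution (coset C (x + e)) j = weight_distribution (coset C z) j"
    if "e \<in> down_steps x" for e
    using that assms weight_distribution_level_invariant[of "x + e" z] by (simp add: down_steps_def)
  then show ?thesis by simp
qed

lemma card_down_steps_level_invariant:
  assumes "level x = level x'"
  shows "card (down_steps x) = card (down_steps x')"
proof (cases "level x")
  case 0
  then show ?thesis using assms by (simp add: down_steps_def)
next
  case (Suc m)
  obtain e where "e \<in> steps" "level (x + e) = m" using Suc by (rule level_step_down)
  define z where "z = x + e"
  have count: "card (down_steps y) * weight_distribution (coset C z) m =
      Suc m * weight_distribution (coset C y) (Suc m)" if "level y = Suc m" for y
    using sum_steps_weight_distribution[of m y] sum_steps_weight_distribution_split[of m y]
      sum_down_steps_weight_distribution[of y z m] weight_distribution_below_level[of m y]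
      that \<open>level (x + e) = m\<close> by (simp add: z_def)
  have "card (down_steps x) * weight_distribution (coset C z) m =
      card (down_steps x') * weight_distribution (coset C z) m"
    using count[of x] count[of x'] Suc assms
      fun_cong[OF weight_distribution_level_invariant[OF assms], of "Suc m"] by simp
  moreover have "0 < weight_distribution (coset C z) m"
    using weight_distribution_level_pos[of z] \<open>level (x + e) = m\<close> by (simp add: z_def)
  ultimately show ?thesis by simp
qed

lemma sum_down_steps_level_invariant:
  assumes "level x = level x'"
  shows "(\<Sum>e\<in>down_steps x. weight_distribution (coset C (x + e)) j) =
    (\<Sum>e\<in>down_steps x'. weight_distribution (coset C (x' + e)) j)"
proof (cases "level x")
  case 0
  then show ?thesis using assms by (simp add: down_steps_def)
next
  case (Suc m)
  then obtain e where "e \<in> steps" "level (x + e) = m" by (rule level_step_down)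
  then show ?thesis using Suc assms card_down_steps_level_invariant[OF assms]
    by (simp add: sum_down_steps_weight_distribution[of _ "x + e"])
qed

lemma card_flat_steps_level_invariant:
  assumes "level x = level x'"
  shows "card (flat_steps x) = card (flat_steps x')"
proof -
  define i where "i = level x"
  have "(\<Sum>e\<in>steps. weight_distribution (coset C (x + e)) i) =
      (\<Sum>e\<in>steps. weight_distribution (coset C (x' + e)) i)"
    using sum_steps_weight_distribution[of i x] sum_steps_weight_distribution[of i x'] assms
      weight_distribution_level_invariant[OF assms] by (simp add: i_def)
  then have "card (flat_steps x) * weight_distribution (coset C x) i =
      card (flat_steps x') * weight_distribution (coset C x) i"
    using sum_steps_weight_distribution_split[of i x] sum_steps_weight_distribution_split[of i x']
      assms sum_down_steps_level_invariant[OF assms, of i]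
      weight_distribution_level_invariant[OF assms] by (simp add: i_def)
  moreover have "0 < weight_distribution (coset C x) i"
    using weight_distribution_level_pos by (simp add: i_def)
  ultimately show ?thesis by simp
qed

lemma card_up_steps_level_invariant:
  assumes "level x = level x'"
  shows "card (up_steps x) = card (up_steps x')"
  using sum_steps_split[of "\<lambda>_. 1::nat" x] sum_steps_split[of "\<lambda>_. 1::nat" x']
    card_down_steps_level_invariant[OF assms] card_flat_steps_level_invariant[OF assms]
  by simp

lemma sum_layer_card_up_steps:
  "level z = l \<Longrightarrow> (\<Sum>x\<in>layer l. card (up_steps x)) = card (layer l) * card (up_steps z)"
proof -
  assume "level z = l"
  then have "(\<Sum>x\<in>layer l. card (up_steps x)) = (\<Sum>x\<in>layer l. card (up_steps z))"
    by (intro sum.cong refl card_up_steps_level_invariant) (simp add: layer_def)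
  then show ?thesis by simp
qed

lemma sum_layer_card_down_steps:
  "level z = l \<Longrightarrow> (\<Sum>x\<in>layer l. card (down_steps x)) = card (layer l) * card (down_steps z)"
proof -
  assume "level z = l"
  then have "(\<Sum>x\<in>layer l. card (down_steps x)) = (\<Sum>x\<in>layer l. card (down_steps z))"
    by (intro sum.cong refl card_down_steps_level_invariant) (simp add: layer_def)
  then show ?thesis by simp
qed

lemma card_layer_mult_le_square:
  "card (layer m) * card (layer (Suc (Suc m))) \<le> (card (layer (Suc m)))\<^sup>2"
proof (cases "layer (Suc (Suc m)) = {}")
  case False
  then obtain x2 where x2: "level x2 = Suc (Suc m)" by (auto simp: layer_def)
  then obtain e2 where e2: "e2 \<in> steps" "level (x2 + e2) = Suc m" by (rule level_step_down)
  define x1 where "x1 = x2 + e2"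
  then obtain e1 where e1: "e1 \<in> steps" "level (x1 + e1) = m"
    using e2 by (metis level_step_down)
  define x0 where "x0 = x1 + e1"
  show ?thesis
  proof (rule nat_mult_le_square_of_ratios)
    show "card (layer m) * card (up_steps x0) = card (layer (Suc m)) * card (down_steps x1)"
      using layer_edge_count[of m] e1 e2 x1_def x0_def
        sum_layer_card_up_steps[of x0] sum_layer_card_down_steps[of x1] by simp
    show "card (layer (Suc m)) * card (up_steps x1) = card (layer (Suc (Suc m))) * card (down_steps x2)"
      using layer_edge_count[of "Suc m"] e2 x2 x1_def
        sum_layer_card_up_steps[of x1] sum_layer_card_down_steps[of x2] by simp
    show "card (up_steps x1) \<le> card (up_steps x0)"
      using card_up_steps_le_below[of e1 x1] e1 e2 x0_def x1_def by simp
    show "card (down_steps x1) \<le> card (down_steps x2)"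
      using card_down_steps_below_le[of e2 x2] e2 x2 x1_def by simp
    have "e2 \<in> down_steps x2" using e2 x2 by (simp add: down_steps_def)
    then show "0 < card (down_steps x2)" by (auto simp: card_gt_0_iff)
  qed
qed simp

end

theorem corollary5:
  fixes C :: "('n::finite \<Rightarrow> 'a::{finite,field}) set"
  assumes "linear_code C"
    and "projective_code C"
    and "completely_regular C"
    and "1 \<le> i" and "i \<le> covering_radius C - 1"
  shows "(num_cosets C i)^2 \<ge> num_cosets C (i - 1) * num_cosets C (i + 1)"
proof -
  interpret completely_regular_code C using assms(1,3) by unfold_locales
  obtain m where i: "i = Suc m" using assms(4) by (cases i) auto
  have "(card C)\<^sup>2 * (num_cosets C m * num_cosets C (Suc (Suc m)))
      \<le> (card C)\<^sup>2 * (num_cosets C (Suc m))\<^sup>2"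
    using card_layer_mult_le_square[of m] by (simp add: card_layer power2_eq_square ac_simps)
  moreover have "0 < card C" using zero_mem by (auto simp: card_gt_0_iff)
  ultimately show ?thesis using i by simp
qed

end
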